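(* Let $N=1$, $\chi>0$, $k\in(-1,0)$ and $m>m_c=1-k$. Then every stationary state $\bar\rho\in\mathcal Y$ of (KS) satisfies, for every $p\in\mathbb R$, $$\bar\rho(p)^m=\frac{\chi}{2}\int_{\mathbb R}\int_0^1|q|^k\,\bar\rho(p-sq)\,\bar\rho(p-sq+q)\,ds\,dq.$$
   Context: Here $N=1$. Let $W_k(x)=|x|^k/k$ and, for a density $\rho$, $S_k=W_k*\rho$, with $\partial_x S_k(x)=\int_{\mathbb R}W_k'(x-y)(\rho(y)-\rho(x))\,dy$. Equation (KS) is $\partial_t\rho=\partial_{xx}\rho^m+\chi\partial_x(\rho\,\partial_xS_k)$. $\mathcal Y=\{\rho\in L^1_+(\mathbb R)\cap L^m(\mathbb R):\|\rho\|_1=1,\ \int x\rho=0\}$. A stationary state of (KS) is $\bar\rho\in L^1_+\cap L^\infty(\mathbb R)$ with $\|\bar\rho\|_1=1$ such that, with $\bar S_k=W_k*\bar\rho$: $\bar\rho^m\in W^{1,2}_{loc}$, $\partial_x\bar S_k\in L^1_{loc}$, $\partial_x\bar\rho^m=-\chi\bar\rho\,\partial_x\bar S_k$ in distributions, and $\bar\rho\in C^{0,\alpha}(\mathbb R)$ for some $\alpha\in(-k,1)$. *)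

theory Defs
  imports "HOL-Analysis.Analysis"
begin

text \<open>Derivative of the kernel W_k(x) = |x|^k / k, namely W_k'(x) = sgn(x) |x|^(k-1).\<close>
definition Wk_deriv :: "real \<Rightarrow> real \<Rightarrow> real" where
  "Wk_deriv k x = sgn x * \<bar>x\<bar> powr (k - 1)"

definition dS :: "real \<Rightarrow> (real \<Rightarrow> real) \<Rightarrow> real \<Rightarrow> real" where
  "dS k \<rho> x = (\<integral>y. Wk_deriv k (x - y) * (\<rho> y - \<rho> x) \<partial>lborel)"

definition test_fun :: "(real \<Rightarrow> real) \<Rightarrow> bool" where
  "test_fun \<phi> \<longleftrightarrow>
     (\<exists>D :: nat \<Rightarrow> real \<Rightarrow> real. D 0 = \<phi> \<and>
        (\<forall>n x. (D n has_real_derivative D (Suc n) x) (at x)))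
     \<and> bounded {x. \<phi> x \<noteq> 0}"

definition L1loc :: "(real \<Rightarrow> real) \<Rightarrow> bool" where
  "L1loc f \<longleftrightarrow> f \<in> borel_measurable lborel \<and>
     (\<forall>a b. set_integrable lborel {a..b} f)"

definition L2loc :: "(real \<Rightarrow> real) \<Rightarrow> bool" where
  "L2loc f \<longleftrightarrow> f \<in> borel_measurable lborel \<and>
     (\<forall>a b. set_integrable lborel {a..b} (\<lambda>x. (f x)\<^sup>2))"

definition weak_deriv :: "(real \<Rightarrow> real) \<Rightarrow> (real \<Rightarrow> real) \<Rightarrow> bool" where
  "weak_deriv f g \<longleftrightarrow> (\<forall>\<phi>. test_fun \<phi> \<longrightarrow>
     (\<integral>x. f x * deriv \<phi> x \<partial>lborel) = - (\<integral>x. g x * \<phi> x \<partial>lborel))"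

definition W12loc :: "(real \<Rightarrow> real) \<Rightarrow> bool" where
  "W12loc f \<longleftrightarrow> L2loc f \<and> (\<exists>g. L2loc g \<and> weak_deriv f g)"

definition holder :: "real \<Rightarrow> (real \<Rightarrow> real) \<Rightarrow> bool" where
  "holder \<alpha> f \<longleftrightarrow> bounded (range f) \<and>
     (\<exists>C. \<forall>x y. \<bar>f x - f y\<bar> \<le> C * \<bar>x - y\<bar> powr \<alpha>)"

definition in_Y :: "real \<Rightarrow> (real \<Rightarrow> real) \<Rightarrow> bool" where
  "in_Y m \<rho> \<longleftrightarrow> (\<forall>x. 0 \<le> \<rho> x) \<and> integrable lborel \<rho> \<and>
     integrable lborel (\<lambda>x. \<bar>\<rho> x\<bar> powr m) \<and>
     (\<integral>x. \<rho> x \<partial>lborel) = 1 \<and>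
     integrable lborel (\<lambda>x. x * \<rho> x) \<and> (\<integral>x. x * \<rho> x \<partial>lborel) = 0"

definition stationary_state :: "real \<Rightarrow> real \<Rightarrow> real \<Rightarrow> (real \<Rightarrow> real) \<Rightarrow> bool" where
  "stationary_state chi k m \<rho> \<longleftrightarrow>
     (\<forall>x. 0 \<le> \<rho> x) \<and> \<rho> \<in> borel_measurable lborel \<and> integrable lborel \<rho> \<and>
     bounded (range \<rho>) \<and> (\<integral>x. \<rho> x \<partial>lborel) = 1 \<and>
     W12loc (\<lambda>x. \<rho> x powr m) \<and>
     L1loc (dS k \<rho>) \<and>
     weak_deriv (\<lambda>x. \<rho> x powr m) (\<lambda>x. - chi * \<rho> x * dS k \<rho> x) \<and>
     (\<exists>\<alpha>. -k < \<alpha> \<and> \<alpha> < 1 \<and> holder \<alpha> \<rho>)"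

end

theory Submission
  imports Defs "HOL-Computational_Algebra.Polynomial"
begin

text \<open>A stationary state satisfies (rho^m)' = chi rho K weakly, where K x = integral over h of
  sgn h |h|^(k-1) (rho(x+h) - rho x). Testing against smooth plateaus that approximate indicators
  of intervals, and using integrability of rho^m, gives rho(p)^m = chi times the integral of
  rho K over (-inf, p]. Holder continuity with exponent above -k makes the integrand absolutely
  integrable in (x, h), so the integrals can be exchanged. Pairing h with -h, the correlations
  of rho over (-inf, p] at the shifts h and -h differ exactly by the correlation over the window
  (p - h, p], and the substitution x = p - s q turns that window into the segment integral of
  the statement.\<close>

section \<open>Smooth functions\<close>

definition smooth :: "(real \<Rightarrow> real) \<Rightarrow> bool" where
  "smooth f \<longleftrightarrow> (\<exists>D :: nat \<Rightarrow> real \<Rightarrow> real. D 0 = f \<and>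
     (\<forall>n x. (D n has_real_derivative D (Suc n) x) (at x)))"

lemma test_fun_iff: "test_fun \<phi> \<longleftrightarrow> smooth \<phi> \<and> bounded {x. \<phi> x \<noteq> 0}"
  by (simp add: test_fun_def smooth_def)

lemma smooth_coinduct:
  assumes "f \<in> S" and closed: "\<And>h. h \<in> S \<Longrightarrow> \<exists>h'\<in>S. \<forall>x. (h has_real_derivative h' x) (at x)"
  shows "smooth f"
proof -
  obtain d where d: "\<And>h. h \<in> S \<Longrightarrow> d h \<in> S \<and> (\<forall>x. (h has_real_derivative d h x) (at x))"
    using closed by metis
  have "(d ^^ n) f \<in> S" for n
    by (induction n) (auto simp: assms(1) d)
  then show ?thesis
    unfolding smooth_def by (intro exI[of _ "\<lambda>n. (d ^^ n) f"]) (simp add: d)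
qed

lemma smooth_derivative:
  assumes "smooth f"
  obtains f' where "\<And>x. (f has_real_derivative f' x) (at x)" and "smooth f'"
proof -
  obtain D where D0: "D 0 = f" and D: "\<And>n x. (D n has_real_derivative D (Suc n) x) (at x)"
    using assms unfolding smooth_def by blast
  have "smooth (D 1)"
    unfolding smooth_def by (rule exI[of _ "\<lambda>n. D (Suc n)"]) (simp add: D)
  then show ?thesis
    by (rule that[of "D 1", rotated]) (use D[of 0] in \<open>simp add: D0\<close>)
qed

lemma smooth_if_derivative_smooth:
  assumes "\<And>x. (f has_real_derivative f' x) (at x)" and "smooth f'"
  shows "smooth f"
proof -
  obtain D where "D 0 = f'" and D: "\<And>n x. (D n has_real_derivative D (Suc n) x) (at x)"
    using assms(2) unfolding smooth_def by blast
  then show ?thesis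
    unfolding smooth_def using assms(1)
    by (intro exI[of _ "\<lambda>n. case n of 0 \<Rightarrow> f | Suc j \<Rightarrow> D j"]) (auto split: nat.split)
qed

lemma smooth_imp_continuous_on: "smooth f \<Longrightarrow> continuous_on S f"
  by (metis DERIV_isCont continuous_at_imp_continuous_on smooth_derivative)

lemma smooth_const: "smooth (\<lambda>x. c)"
  by (rule smooth_coinduct[of _ "{\<lambda>x. c, \<lambda>x. 0}"]) auto

text \<open>By the product rule, sums of products of smooth functions form a class closed under
  differentiation, to which smooth_coinduct applies.\<close>
inductive_set sums_of_smooth_products :: "(real \<Rightarrow> real) set" where
  "smooth a \<Longrightarrow> smooth b \<Longrightarrow> (\<lambda>x. a x * b x) \<in> sums_of_smooth_products"
| "u \<in> sums_of_smooth_products \<Longrightarrow> v \<in> sums_of_smooth_products \<Longrightarrow>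
     (\<lambda>x. u x + v x) \<in> sums_of_smooth_products"

lemma sums_of_smooth_products_derivative:
  "h \<in> sums_of_smooth_products \<Longrightarrow>
     \<exists>h'\<in>sums_of_smooth_products. \<forall>x. (h has_real_derivative h' x) (at x)"
proof (induction rule: sums_of_smooth_products.induct)
  case (1 a b)
  obtain a' b' where "\<And>x. (a has_real_derivative a' x) (at x)" "smooth a'"
    and "\<And>x. (b has_real_derivative b' x) (at x)" "smooth b'"
    using 1 smooth_derivative by metis
  with 1 show ?case
    by (intro bexI[of _ "\<lambda>x. a' x * b x + a x * b' x"])
       (auto intro!: derivative_eq_intros sums_of_smooth_products.intros)
next
  case (2 u v)
  then show ?case
    by (metis (mono_tags, lifting) DERIV_add sums_of_smooth_products.intros(2))
qed

lemma smooth_mult: "smooth u \<Longrightarrow> smooth v \<Longrightarrow> smooth (\<lambda>x. u x * v x)"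
  by (rule smooth_coinduct[OF _ sums_of_smooth_products_derivative])
     (auto intro: sums_of_smooth_products.intros)

lemma smooth_affine_comp:
  assumes "smooth u"
  shows "smooth (\<lambda>x. u (c * x + t))"
proof (rule smooth_coinduct[of _ "{\<lambda>x. e * u (c * x + t) | e u. smooth u}"])
  fix h assume "h \<in> {\<lambda>x. e * u (c * x + t) | e u. smooth u}"
  then obtain e u where h: "h = (\<lambda>x. e * u (c * x + t))" and "smooth u" by blast
  then obtain u' where u': "\<And>x. (u has_real_derivative u' x) (at x)" "smooth u'"
    using smooth_derivative by metis
  have "(h has_real_derivative (e * c) * u' (c * x + t)) (at x)" for x
    unfolding h by (auto intro!: derivative_eq_intros DERIV_chain2[OF u'(1)])
  with u'(2) show "\<exists>h'\<in>{\<lambda>x. e * u (c * x + t) | e u. smooth u}. \<forall>x. (h has_real_derivative h' x) (at x)"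
    by (intro bexI[of _ "\<lambda>x. (e * c) * u' (c * x + t)"]) auto
next
  show "(\<lambda>x. u (c * x + t)) \<in> {\<lambda>x. e * u (c * x + t) | e u. smooth u}"
    using assms by (intro CollectI exI[of _ 1] exI[of _ u]) simp
qed

section \<open>A smooth step function\<close>

text \<open>The derivative of P(1/x) e^(-1/x) is Q(1/x) e^(-1/x) with Q = X^2 (P - P'), and all these
  functions are flat at 0; so the family is closed under differentiation.\<close>
definition flat_exp :: "real poly \<Rightarrow> real \<Rightarrow> real" where
  "flat_exp P x = (if x > 0 then poly P (1 / x) * exp (- 1 / x) else 0)"

definition flat_exp_deriv_poly :: "real poly \<Rightarrow> real poly" where
  "flat_exp_deriv_poly P = [:0, 0, 1:] * (P - pderiv P)"

lemma poly_times_exp_tendsto_0: "((\<lambda>t::real. poly P t * t / exp t) \<longlongrightarrow> 0) at_top"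
proof -
  have "((\<lambda>t. \<Sum>i\<le>degree P. coeff P i * (t ^ Suc i / exp t)) \<longlongrightarrow> (\<Sum>i\<le>degree P. coeff P i * 0)) at_top"
    by (intro tendsto_sum tendsto_mult tendsto_const tendsto_power_div_exp_0)
  moreover have "poly P t * t = (\<Sum>i\<le>degree P. coeff P i * t ^ Suc i)" for t
    by (simp add: poly_altdef sum_distrib_left sum_distrib_right mult_ac)
  then have "poly P t * t / exp t = (\<Sum>i\<le>degree P. coeff P i * (t ^ Suc i / exp t))" for t
    by (simp add: sum_divide_distrib)
  ultimately show ?thesis by simp
qed

lemma has_real_derivative_flat_exp:
  "(flat_exp P has_real_derivative flat_exp (flat_exp_deriv_poly P) x) (at x)"
proof -
  consider "x > 0" | "x < 0" | "x = 0" by linarith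
  then show ?thesis
  proof cases
    case 1
    have "((\<lambda>x. poly P (1/x) * exp (-1/x)) has_real_derivative flat_exp (flat_exp_deriv_poly P) x) (at x)"
      using 1 unfolding flat_exp_def flat_exp_deriv_poly_def
      by (auto intro!: derivative_eq_intros DERIV_chain2[where f="poly P"]
          simp: field_simps power2_eq_square)
    then show ?thesis
      by (rule has_field_derivative_transform_within_open[where S="{0<..}"])
         (use 1 in \<open>auto simp: flat_exp_def\<close>)
  next
    case 2
    have "((\<lambda>x. 0) has_real_derivative flat_exp (flat_exp_deriv_poly P) x) (at x)"
      using 2 by (auto simp: flat_exp_def)
    then show ?thesis
      by (rule has_field_derivative_transform_within_open[where S="{..<0}"])
         (use 2 in \<open>auto simp: flat_exp_def\<close>)
  next
    case 3
    have "((\<lambda>y. (flat_exp P y - flat_exp P 0) / (y - 0)) \<longlongrightarrow> 0) (at 0)"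
    proof (rule filterlim_split_at)
      show "((\<lambda>y. (flat_exp P y - flat_exp P 0) / (y - 0)) \<longlongrightarrow> 0) (at_left 0)"
        by (rule tendsto_eventually)
           (auto simp: flat_exp_def eventually_at_left_field intro: exI[of _ "-1"])
      have "\<forall>\<^sub>F t in at_top. poly P t * t / exp t =
          (flat_exp P (inverse t) - flat_exp P 0) / (inverse t - 0)"
        using eventually_gt_at_top[of 0] by eventually_elim (auto simp: flat_exp_def exp_minus field_simps)
      then have "((\<lambda>t. (flat_exp P (inverse t) - flat_exp P 0) / (inverse t - 0)) \<longlongrightarrow> 0) at_top"
        by (rule Lim_transform_eventually[OF poly_times_exp_tendsto_0])
      then show "((\<lambda>y. (flat_exp P y - flat_exp P 0) / (y - 0)) \<longlongrightarrow> 0) (at_right 0)"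
        by (simp add: filterlim_at_right_to_top)
    qed
    then show ?thesis using 3 by (simp add: has_field_derivative_iff flat_exp_def)
  qed
qed

lemma smooth_flat_exp: "smooth (flat_exp P)"
  by (rule smooth_coinduct[of _ "range flat_exp"]) (use has_real_derivative_flat_exp in auto)

definition bump :: "real \<Rightarrow> real" where
  "bump x = flat_exp 1 x * flat_exp 1 (1 - x)"

lemma smooth_bump: "smooth bump"
  unfolding bump_def
  using smooth_mult[OF smooth_flat_exp smooth_affine_comp[OF smooth_flat_exp, where c="-1" and t=1]] by simp

lemma bump_nonneg: "0 \<le> bump x"
  and bump_pos: "0 < x \<Longrightarrow> x < 1 \<Longrightarrow> 0 < bump x"
  and bump_eq_0: "x \<le> 0 \<or> 1 \<le> x \<Longrightarrow> bump x = 0"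
  by (auto simp: bump_def flat_exp_def)

lemma bump_continuous_on: "continuous_on S bump"
  by (rule smooth_imp_continuous_on[OF smooth_bump])

lemma bump_measurable[measurable]: "bump \<in> borel_measurable borel"
  by (rule borel_measurable_continuous_onI[OF bump_continuous_on])

lemma integral_bump_eq_0: "(\<And>x. x \<in> {a..b} \<Longrightarrow> bump x = 0) \<Longrightarrow> integral {a..b} bump = 0"
  by (metis (no_types, lifting) integral_0 integral_cong)

definition bump_primitive :: "real \<Rightarrow> real" where
  "bump_primitive y = integral {0..y} bump"

lemma bump_primitive_eq_integral:
  assumes "a \<le> 0"
  shows "integral {a..y} bump = bump_primitive y"
proof (cases "y \<le> 0")
  case True
  then have "integral {a..y} bump = 0" "integral {0..y} bump = 0"
    by (auto intro!: integral_bump_eq_0 bump_eq_0)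
  then show ?thesis
    by (simp add: bump_primitive_def)
next
  case False
  have "integral {a..0} bump + integral {0..y} bump = integral {a..y} bump"
    by (rule Henstock_Kurzweil_Integration.integral_combine)
       (use assms False integrable_continuous_interval bump_continuous_on in auto)
  moreover have "integral {a..0} bump = 0"
    by (auto intro!: integral_bump_eq_0 bump_eq_0)
  ultimately show ?thesis
    by (simp add: bump_primitive_def)
qed

lemma has_real_derivative_bump_primitive: "(bump_primitive has_real_derivative bump x) (at x)"
proof -
  have "((\<lambda>u. integral {-\<bar>x\<bar>-1..u} bump) has_real_derivative bump x) (at x within {-\<bar>x\<bar>-1..\<bar>x\<bar>+1})"
    by (rule integral_has_real_derivative[OF bump_continuous_on]) auto
  moreover have "at x within {-\<bar>x\<bar>-1..\<bar>x\<bar>+1} = at x"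
    by (rule at_within_Icc_at) auto
  ultimately show ?thesis
    using bump_primitive_eq_integral[of "-\<bar>x\<bar>-1"] by simp
qed

lemma bump_primitive_mono: "x \<le> y \<Longrightarrow> bump_primitive x \<le> bump_primitive y"
  by (rule DERIV_nonneg_imp_nondecreasing)
     (assumption, blast intro: has_real_derivative_bump_primitive bump_nonneg)

lemma bump_primitive_eq_0: "y \<le> 0 \<Longrightarrow> bump_primitive y = 0"
  unfolding bump_primitive_def by (rule integral_bump_eq_0) (use bump_eq_0 in auto)

lemma bump_primitive_eq_1:
  assumes "1 \<le> y"
  shows "bump_primitive y = bump_primitive 1"
proof -
  have "integral {0..1} bump + integral {1..y} bump = integral {0..y} bump"
    by (rule Henstock_Kurzweil_Integration.integral_combine)
       (use assms integrable_continuous_interval bump_continuous_on in auto)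
  moreover have "integral {1..y} bump = 0"
    by (auto intro!: integral_bump_eq_0 bump_eq_0)
  ultimately show ?thesis
    by (simp add: bump_primitive_def)
qed

text \<open>If the total mass vanished, the primitive would be constant on (0,1), contradicting
  the positivity of its derivative there.\<close>
lemma bump_primitive_1_pos: "0 < bump_primitive 1"
proof (rule ccontr)
  assume "\<not> 0 < bump_primitive 1"
  then have "bump_primitive y = 0" if "y \<in> {0<..<1}" for y
    using bump_primitive_mono[of 0 y] bump_primitive_mono[of y 1] bump_primitive_eq_0[of 0] that
    by auto
  then have "(bump_primitive has_real_derivative 0) (at (1/2))"
    by (intro has_field_derivative_transform_within_open[where S="{0<..<1}", OF DERIV_const]) auto
  then have "bump (1/2) = 0"
    using has_real_derivative_bump_primitive DERIV_unique by blast
  with bump_pos[of "1/2"] show False by simp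
qed

definition step :: "real \<Rightarrow> real" where
  "step x = bump_primitive x / bump_primitive 1"

lemma has_real_derivative_step: "(step has_real_derivative bump x / bump_primitive 1) (at x)"
  unfolding step_def
  using DERIV_cdivide[OF has_real_derivative_bump_primitive, where c="bump_primitive 1"] by simp

lemma smooth_step: "smooth step"
proof (rule smooth_if_derivative_smooth[OF has_real_derivative_step])
  have "smooth (\<lambda>x. bump x * (1 / bump_primitive 1))"
    by (rule smooth_mult[OF smooth_bump smooth_const])
  then show "smooth (\<lambda>x. bump x / bump_primitive 1)"
    by (simp only: times_divide_eq_right mult_1_right)
qed

lemma step_eq_0: "x \<le> 0 \<Longrightarrow> step x = 0"
  and step_eq_1: "1 \<le> x \<Longrightarrow> step x = 1"
  using bump_primitive_1_pos bump_primitive_eq_1[of x]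
  by (simp_all add: step_def bump_primitive_eq_0)

lemma step_nonneg: "0 \<le> step x"
proof (cases "x \<le> 0")
  case False
  then show ?thesis
    using bump_primitive_mono[of 0 x] bump_primitive_eq_0[of 0] bump_primitive_1_pos
    by (simp add: step_def)
qed (simp add: step_eq_0)

lemma step_le_1: "step x \<le> 1"
proof (cases "1 \<le> x")
  case False
  then show ?thesis
    using bump_primitive_mono[of x 1] bump_primitive_1_pos by (simp add: step_def)
qed (simp add: step_eq_1)

lemma integrable_bump: "integrable lborel bump"
proof -
  have "indicator {0..1} x *\<^sub>R bump x = bump x" for x
    using bump_eq_0[of x] by (cases "x \<in> {0..1}") auto
  then have "(\<lambda>x. indicator {0..1} x *\<^sub>R bump x) = bump"
    by blast
  then show ?thesis
    using borel_integrable_compact[OF compact_Icc bump_continuous_on, of 0 1] by simp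
qed

lemma lebesgue_integral_bump: "(\<integral>x. bump x \<partial>lborel) = bump_primitive 1"
proof -
  have "(if x \<in> {0..1} then bump x else 0) = bump x" for x
    using bump_eq_0[of x] by auto
  then have "(\<lambda>x. if x \<in> {0..1} then bump x else 0) = bump"
    by blast
  then have "(\<integral>x. bump x \<partial>lborel) = integral UNIV (\<lambda>x. if x \<in> {0..1} then bump x else 0)"
    using integral_lborel[OF integrable_bump] by simp
  then show ?thesis
    by (simp only: integral_restrict_UNIV bump_primitive_def)
qed

section \<open>Weak derivatives and the fundamental theorem of calculus\<close>

definition plateau :: "real \<Rightarrow> real \<Rightarrow> real \<Rightarrow> real \<Rightarrow> real" where
  "plateau a b c x = step (c * x + (1 - c * a)) * step ((- c) * x + (1 + c * b))"

lemma smooth_plateau: "smooth (plateau a b c)"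
  unfolding plateau_def by (intro smooth_mult smooth_affine_comp smooth_step)

lemma plateau_measurable[measurable]: "plateau a b c \<in> borel_measurable borel"
  by (rule borel_measurable_continuous_onI[OF smooth_imp_continuous_on[OF smooth_plateau]])

lemma plateau_eq_0: "1 \<le> c * (a - x) \<or> 1 \<le> c * (x - b) \<Longrightarrow> plateau a b c x = 0"
  by (auto simp: plateau_def algebra_simps intro!: step_eq_0)

lemma plateau_eq_1: "0 \<le> c \<Longrightarrow> a \<le> x \<Longrightarrow> x \<le> b \<Longrightarrow> plateau a b c x = 1"
  using mult_left_mono[of a x c] mult_left_mono[of x b c]
  by (simp add: plateau_def step_eq_1 algebra_simps)

lemma plateau_nonneg: "0 \<le> plateau a b c x"
  and plateau_le_1: "plateau a b c x \<le> 1"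
  unfolding plateau_def using step_nonneg step_le_1 by (auto intro: mult_le_one)

lemma plateau_eq_0_outside:
  assumes "1 \<le> c" and "x \<notin> {a - 1..b + 1}"
  shows "plateau a b c x = 0"
proof (rule plateau_eq_0)
  consider "x < a - 1" | "b + 1 < x"
    using assms(2) by fastforce
  then show "1 \<le> c * (a - x) \<or> 1 \<le> c * (x - b)"
  proof cases
    case 1
    then have "1 * 1 \<le> c * (a - x)"
      using assms(1) by (intro mult_mono) auto
    then show ?thesis by simp
  next
    case 2
    then have "1 * 1 \<le> c * (x - b)"
      using assms(1) by (intro mult_mono) auto
    then show ?thesis by simp
  qed
qed

lemma test_fun_plateau:
  assumes "1 \<le> c"
  shows "test_fun (plateau a b c)"
proof -
  have "{x. plateau a b c x \<noteq> 0} \<subseteq> {a - 1..b + 1}"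
    using plateau_eq_0_outside[OF assms] by blast
  then show ?thesis
    unfolding test_fun_iff using smooth_plateau bounded_subset[OF bounded_closed_interval] by blast
qed

lemma deriv_plateau:
  assumes "0 < c" and "a \<le> b"
  shows "deriv (plateau a b c) x =
    c * (bump (c * x + (1 - c * a)) - bump ((- c) * x + (1 + c * b))) / bump_primitive 1"
proof -
  let ?A = "c * x + (1 - c * a)" and ?B = "(- c) * x + (1 + c * b)"
  have "((\<lambda>y. step (c * y + (1 - c * a))) has_real_derivative bump ?A / bump_primitive 1 * c) (at x)"
    by (rule DERIV_chain2[OF has_real_derivative_step]) (auto intro!: derivative_eq_intros)
  moreover have "((\<lambda>y. step ((- c) * y + (1 + c * b))) has_real_derivative bump ?B / bump_primitive 1 * (- c)) (at x)"
    by (rule DERIV_chain2[OF has_real_derivative_step]) (auto intro!: derivative_eq_intros)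
  ultimately have "(plateau a b c has_real_derivative
      (bump ?A / bump_primitive 1 * c) * step ?B + (bump ?B / bump_primitive 1 * (- c)) * step ?A) (at x)"
    unfolding plateau_def[abs_def] by (rule DERIV_mult)
  moreover have "step ?B = 1" if "bump ?A \<noteq> 0"
  proof -
    from that have "?A < 1"
      by (meson bump_eq_0 not_le)
    then have "c * (x - a) < 0"
      by (simp add: algebra_simps)
    then have "x < a"
      using assms by (simp add: mult_less_0_iff)
    then show ?thesis
      using assms mult_left_mono[of x b c] by (auto intro!: step_eq_1 simp: algebra_simps)
  qed
  moreover have "step ?A = 1" if "bump ?B \<noteq> 0"
  proof -
    from that have "?B < 1"
      by (meson bump_eq_0 not_le)
    then have "c * (b - x) < 0"
      by (simp add: algebra_simps)
    then have "b < x"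
      using assms by (simp add: mult_less_0_iff)
    then show ?thesis
      using assms mult_left_mono[of a x c] by (auto intro!: step_eq_1 simp: algebra_simps)
  qed
  ultimately show ?thesis
    using bump_primitive_1_pos
    by (cases "bump ?A = 0"; cases "bump ?B = 0") (auto dest!: DERIV_imp_deriv simp: field_simps)
qed

lemma plateau_tendsto_indicator:
  "(\<lambda>n. plateau a b (real (Suc n)) x) \<longlonglongrightarrow> indicator {a..b} x"
proof (cases "x \<in> {a..b}")
  case True
  then show ?thesis by (simp add: plateau_eq_1)
next
  case False
  have large: "\<forall>\<^sub>F n in sequentially. z \<le> real (Suc n)" for z
    using filterlim_compose[OF filterlim_real_sequentially filterlim_Suc]
    unfolding filterlim_at_top by blast
  consider "x < a" | "b < x"
    using False by fastforce
  then have "\<forall>\<^sub>F n in sequentially. plateau a b (real (Suc n)) x = 0"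
  proof cases
    case 1
    show ?thesis
      using large[of "1 / (a - x)"]
      by eventually_elim (use 1 in \<open>auto intro!: plateau_eq_0 simp: field_simps\<close>)
  next
    case 2
    show ?thesis
      using large[of "1 / (x - b)"]
      by eventually_elim (use 2 in \<open>auto intro!: plateau_eq_0 simp: field_simps\<close>)
  qed
  with False show ?thesis
    by (simp add: tendsto_eventually)
qed

lemma integrable_mult_bump_affine:
  assumes [measurable]: "f \<in> borel_measurable borel" and bound: "\<And>x. \<bar>f x\<bar> \<le> B" and "c \<noteq> 0"
  shows "integrable lborel (\<lambda>x. f x * bump (c * x + t))"
proof (rule Bochner_Integration.integrable_bound)
  show "integrable lborel (\<lambda>x. B * bump (c * x + t))"
    using lborel_integrable_real_affine[OF integrable_bump \<open>c \<noteq> 0\<close>, of t] by (simp add: add.commute)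
  have "0 \<le> B"
    using bound[of 0] by linarith
  then show "AE x in lborel. norm (f x * bump (c * x + t)) \<le> norm (B * bump (c * x + t))"
    using bound bump_nonneg by (intro AE_I2) (simp add: abs_mult mult_right_mono)
qed measurable

lemma integral_mult_bump_affine:
  assumes "c \<noteq> 0"
  shows "(\<integral>x. f x * bump (c * x + t) \<partial>lborel) = (\<integral>y. f ((y - t) / c) * bump y \<partial>lborel) / \<bar>c\<bar>"
proof -
  have "(\<integral>x. f x * bump (c * x + t) \<partial>lborel) =
      \<bar>1 / c\<bar> *\<^sub>R (\<integral>y. f (- t / c + 1 / c * y) * bump (c * (- t / c + 1 / c * y) + t) \<partial>lborel)"
    by (rule lborel_integral_real_affine) (use assms in simp)
  also have "(\<lambda>y. f (- t / c + 1 / c * y) * bump (c * (- t / c + 1 / c * y) + t)) =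
      (\<lambda>y. f ((y - t) / c) * bump y)"
    using assms by (simp add: field_simps)
  finally show ?thesis by simp
qed

lemma tendsto_integral_mult_bump:
  assumes "isCont f a" and "\<And>x. \<bar>f x\<bar> \<le> B"
    and [measurable]: "f \<in> borel_measurable borel" "h \<in> borel_measurable borel"
  shows "(\<lambda>n. \<integral>y. f (a + h y / real (Suc n)) * bump y \<partial>lborel) \<longlonglongrightarrow> f a * bump_primitive 1"
proof -
  have "(\<lambda>n. \<integral>y. f (a + h y / real (Suc n)) * bump y \<partial>lborel) \<longlonglongrightarrow> (\<integral>y. f a * bump y \<partial>lborel)"
  proof (rule integral_dominated_convergence[where w="\<lambda>y. B * bump y"])
    show "AE y in lborel. (\<lambda>n. f (a + h y / real (Suc n)) * bump y) \<longlonglongrightarrow> f a * bump y"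
    proof (rule AE_I2)
      fix y
      have "(\<lambda>n. a + h y * inverse (real (Suc n))) \<longlonglongrightarrow> a + h y * 0"
        by (intro tendsto_intros LIMSEQ_inverse_real_of_nat)
      then have "(\<lambda>n. f (a + h y / real (Suc n))) \<longlonglongrightarrow> f a"
        using isCont_tendsto_compose[OF assms(1)] by (simp add: divide_inverse)
      then show "(\<lambda>n. f (a + h y / real (Suc n)) * bump y) \<longlonglongrightarrow> f a * bump y"
        by (intro tendsto_intros)
    qed
    show "AE y in lborel. norm (f (a + h y / real (Suc n)) * bump y) \<le> B * bump y" for n
      using assms(2) bump_nonneg by (intro AE_I2) (simp add: abs_mult mult_right_mono)
  qed (use integrable_bump in auto)
  then show ?thesis
    using lebesgue_integral_bump by simp
qed

lemma integral_mult_deriv_plateau: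
  assumes [measurable]: "f \<in> borel_measurable borel" and "\<And>x. \<bar>f x\<bar> \<le> B"
    and "0 < c" and "a \<le> b"
  shows "(\<integral>x. f x * deriv (plateau a b c) x \<partial>lborel) =
    ((\<integral>y. f (a + (y - 1) / c) * bump y \<partial>lborel) - (\<integral>y. f (b + (1 - y) / c) * bump y \<partial>lborel))
      / bump_primitive 1"
proof -
  let ?K = "bump_primitive 1"
  let ?X = "\<integral>y. f (a + (y - 1) / c) * bump y \<partial>lborel"
    and ?Y = "\<integral>y. f (b + (1 - y) / c) * bump y \<partial>lborel"
  have "(\<integral>x. f x * deriv (plateau a b c) x \<partial>lborel) =
      (\<integral>x. c / ?K * (f x * bump (c * x + (1 - c * a))) - c / ?K * (f x * bump ((- c) * x + (1 + c * b))) \<partial>lborel)"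
    using bump_primitive_1_pos
    by (intro Bochner_Integration.integral_cong) (auto simp: deriv_plateau assms field_simps)
  also have "\<dots> = c / ?K * (\<integral>x. f x * bump (c * x + (1 - c * a)) \<partial>lborel)
      - c / ?K * (\<integral>x. f x * bump ((- c) * x + (1 + c * b)) \<partial>lborel)"
    using integrable_mult_bump_affine[OF assms(1,2), of c] integrable_mult_bump_affine[OF assms(1,2), of "- c"]
      \<open>0 < c\<close> by simp
  also have "(\<integral>x. f x * bump (c * x + (1 - c * a)) \<partial>lborel) = (\<integral>y. f (a + (y - 1) / c) * bump y \<partial>lborel) / c"
  proof -
    have "(y - (1 - c * a)) / c = a + (y - 1) / c" for y
      using \<open>0 < c\<close> by (simp add: field_simps)
    then show ?thesis
      using integral_mult_bump_affine[of c f "1 - c * a"] \<open>0 < c\<close> by simp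
  qed
  also have "(\<integral>x. f x * bump ((- c) * x + (1 + c * b)) \<partial>lborel) = (\<integral>y. f (b + (1 - y) / c) * bump y \<partial>lborel) / c"
  proof -
    have "(y - (1 + c * b)) / - c = b + (1 - y) / c" for y
      using \<open>0 < c\<close> by (simp add: field_simps)
    then show ?thesis
      using integral_mult_bump_affine[of "- c" f "1 + c * b"] \<open>0 < c\<close> by simp
  qed
  also have "c / ?K * (?X / c) - c / ?K * (?Y / c) = (?X - ?Y) / ?K"
    using \<open>0 < c\<close> by (simp add: diff_divide_distrib)
  finally show ?thesis .
qed

text \<open>Test the weak derivative against plateaus converging to the indicator of [a, b]: the
  derivatives of the plateaus concentrate at a and b, and dominated convergence handles g.\<close>
lemma weak_deriv_imp_integral_Icc:
  assumes wd: "weak_deriv f g" and cont: "\<And>x. isCont f x"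
    and [measurable]: "f \<in> borel_measurable borel" and bound: "\<And>x. \<bar>f x\<bar> \<le> B"
    and [measurable]: "g \<in> borel_measurable borel" and g_int: "\<And>a b. set_integrable lborel {a..b} g"
    and "a \<le> b"
  shows "f b - f a = (LINT x:{a..b}|lborel. g x)"
proof -
  let ?K = "bump_primitive 1" and ?c = "\<lambda>n. real (Suc n)"
  have "(\<lambda>n. (\<integral>x. f x * deriv (plateau a b (?c n)) x \<partial>lborel)) \<longlonglongrightarrow> (f a * ?K - f b * ?K) / ?K"
    unfolding integral_mult_deriv_plateau[OF assms(3) bound of_nat_0_less_iff[THEN iffD2] \<open>a \<le> b\<close>, OF zero_less_Suc]
    by (intro tendsto_intros tendsto_integral_mult_bump[OF cont bound])
       (use bump_primitive_1_pos in auto)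
  moreover have "(\<lambda>n. (\<integral>x. f x * deriv (plateau a b (?c n)) x \<partial>lborel)) \<longlonglongrightarrow> - (\<integral>x. g x * indicator {a..b} x \<partial>lborel)"
  proof -
    have "(\<lambda>n. \<integral>x. g x * plateau a b (?c n) x \<partial>lborel) \<longlonglongrightarrow> (\<integral>x. g x * indicator {a..b} x \<partial>lborel)"
    proof (rule integral_dominated_convergence[where w="\<lambda>x. indicator {a - 1..b + 1} x * \<bar>g x\<bar>"])
      show "integrable lborel (\<lambda>x. indicator {a - 1..b + 1} x * \<bar>g x\<bar>)"
        using integrable_norm[OF g_int[of "a - 1" "b + 1", unfolded set_integrable_def]]
        by (simp add: abs_mult)
      show "AE x in lborel. (\<lambda>n. g x * plateau a b (?c n) x) \<longlonglongrightarrow> g x * indicator {a..b} x"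
        by (intro AE_I2 tendsto_intros plateau_tendsto_indicator)
      show "AE x in lborel. norm (g x * plateau a b (?c n) x) \<le> indicator {a - 1..b + 1} x * \<bar>g x\<bar>" for n
        using plateau_nonneg plateau_le_1 plateau_eq_0_outside[of "?c n"]
        by (intro AE_I2) (auto simp: abs_mult indicator_def mult_left_le)
    qed measurable
    moreover have "(\<integral>x. f x * deriv (plateau a b (?c n)) x \<partial>lborel) = - (\<integral>x. g x * plateau a b (?c n) x \<partial>lborel)" for n
      using wd test_fun_plateau[of "?c n"] unfolding weak_deriv_def by simp
    ultimately show ?thesis
      by (simp add: tendsto_minus_cancel_left)
  qed
  ultimately have "(f a * ?K - f b * ?K) / ?K = - (\<integral>x. g x * indicator {a..b} x \<partial>lborel)"
    by (rule LIMSEQ_unique)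
  moreover have "(f a * ?K - f b * ?K) / ?K = f a - f b"
    using bump_primitive_1_pos by (simp add: left_diff_distrib[symmetric])
  ultimately have "f b - f a = (\<integral>x. g x * indicator {a..b} x \<partial>lborel)"
    by linarith
  then show ?thesis
    by (simp add: set_lebesgue_integral_def mult.commute)
qed

lemma integrable_tendsto_at_bot_imp_0:
  fixes f :: "real \<Rightarrow> real"
  assumes "integrable lborel f" and "(f \<longlongrightarrow> L) at_bot"
  shows "L = 0"
proof (rule ccontr)
  assume "L \<noteq> 0"
  have "((\<lambda>a. \<bar>f a\<bar>) \<longlongrightarrow> \<bar>L\<bar>) at_bot"
    by (intro tendsto_intros assms(2))
  then have "\<forall>\<^sub>F a in at_bot. \<bar>L\<bar> / 2 < \<bar>f a\<bar>"
    by (rule order_tendstoD(1)) (use \<open>L \<noteq> 0\<close> in simp)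
  then obtain A where A: "\<And>a. a \<le> A \<Longrightarrow> \<bar>L\<bar> / 2 < \<bar>f a\<bar>"
    unfolding eventually_at_bot_linorder by blast
  have "integrable lborel (\<lambda>x. (\<bar>L\<bar> / 2) * indicator {..A} x)"
    by (rule Bochner_Integration.integrable_bound[OF assms(1)])
       (use A in \<open>auto intro!: AE_I2 simp: indicator_def less_imp_le\<close>)
  then have "integrable lborel (\<lambda>x. (2 / \<bar>L\<bar>) * ((\<bar>L\<bar> / 2) * indicator {..A} x))"
    by (rule integrable_mult_right)
  then have "integrable lborel (indicator {..A} :: real \<Rightarrow> real)"
    using \<open>L \<noteq> 0\<close> by simp
  then have finite: "emeasure lborel {..A} = ennreal (measure lborel {..A})"
    by (simp add: integrable_indicator_iff emeasure_eq_ennreal_measure)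
  define \<mu> where "\<mu> = measure lborel {..A}"
  have "0 \<le> \<mu>"
    by (simp add: \<mu>_def)
  then have "ennreal (\<mu> + 1) = emeasure lborel {A - (\<mu> + 1)..A}"
    by simp
  also have "\<dots> \<le> emeasure lborel {..A}"
    by (rule emeasure_mono) auto
  also have "\<dots> = ennreal \<mu>"
    by (simp add: finite \<mu>_def)
  finally show False
    using \<open>0 \<le> \<mu>\<close> by (simp add: ennreal_le_iff)
qed

lemma weak_deriv_imp_integral_Iic:
  assumes wd: "weak_deriv f g" and cont: "\<And>x. isCont f x"
    and [measurable]: "f \<in> borel_measurable borel" and bound: "\<And>x. \<bar>f x\<bar> \<le> B"
    and [measurable]: "g \<in> borel_measurable borel"
    and f_int: "integrable lborel f" and g_int: "integrable lborel g"
  shows "f p = (LINT x:{..p}|lborel. g x)"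
proof -
  let ?L = "f p - (LINT x:{..p}|lborel. g x)"
  have g_int_Icc: "set_integrable lborel {a..b} g" for a b
    unfolding set_integrable_def by (rule integrable_mult_indicator) (use g_int in auto)
  have "set_integrable lborel {..p} g"
    unfolding set_integrable_def by (rule integrable_mult_indicator) (use g_int in auto)
  then have "((\<lambda>a. LINT x:{a..p}|lborel. g x) \<longlongrightarrow> (LINT x:{..p}|lborel. g x)) at_bot"
    by (rule tendsto_set_lebesgue_integral_at_bot[rotated]) auto
  then have "((\<lambda>a. f p - (LINT x:{a..p}|lborel. g x)) \<longlongrightarrow> ?L) at_bot"
    by (intro tendsto_intros)
  moreover have "\<forall>\<^sub>F a in at_bot. f p - (LINT x:{a..p}|lborel. g x) = f a"
    unfolding eventually_at_bot_linorder
    by (intro exI[of _ p] allI impI)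
       (simp add: weak_deriv_imp_integral_Icc[OF wd cont assms(3) bound assms(5) g_int_Icc, symmetric])
  ultimately have "(f \<longlongrightarrow> ?L) at_bot"
    by (rule Lim_transform_eventually)
  then have "?L = 0"
    by (rule integrable_tendsto_at_bot_imp_0[OF f_int])
  then show ?thesis by simp
qed

section \<open>Reflection and power singularities on the real line\<close>

lemma integrable_indicator_Ioc_powr:
  assumes "-1 < e"
  shows "integrable lborel (\<lambda>t::real. indicator {0<..1} t * t powr e)"
proof -
  have "integrable lebesgue (\<lambda>t::real. indicator {0<..1} t * t powr e)"
    using nonnegative_absolutely_integrable_1[OF integrable_on_powr_from_0'[OF assms, of 1]]
    unfolding set_integrable_def by simp
  then show ?thesis
    using integrable_completion[of "\<lambda>t. indicator {0<..1} t * t powr e" lborel] by simp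
qed

lemma integrable_indicator_Ici_powr:
  assumes "e < -1"
  shows "integrable lborel (\<lambda>t::real. indicator {1..} t * t powr e)"
proof -
  have "(\<lambda>t::real. t powr e) integrable_on {1..}"
    using has_integral_powr_to_inf[OF assms, of 1] by (auto simp: integrable_on_def)
  then have "integrable lebesgue (\<lambda>t::real. indicator {1..} t * t powr e)"
    using nonnegative_absolutely_integrable_1[of "\<lambda>t::real. t powr e" "{1..}"]
    unfolding set_integrable_def by simp
  then show ?thesis
    using integrable_completion[of "\<lambda>t. indicator {1..} t * t powr e" lborel] by simp
qed

lemma integrable_reflect_lborel:
  fixes f :: "real \<Rightarrow> 'a::{banach, second_countable_topology}"
  shows "integrable lborel f \<Longrightarrow> integrable lborel (\<lambda>x. f (- x))"
  using lborel_integrable_real_affine[of f "-1" 0] by simp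

lemma integral_reflect_lborel:
  fixes f :: "real \<Rightarrow> 'a::{banach, second_countable_topology}"
  shows "(\<integral>x. f (- x) \<partial>lborel) = (\<integral>x. f x \<partial>lborel)"
  using lborel_integral_real_affine[of "-1" f 0] by simp

lemma integrable_comp_abs:
  fixes g :: "real \<Rightarrow> real"
  assumes "integrable lborel g" and "\<And>t. t \<le> 0 \<Longrightarrow> g t = 0"
  shows "integrable lborel (\<lambda>h. g \<bar>h\<bar>)"
proof -
  have "g \<bar>h\<bar> = g h + g (- h)" for h
    using assms(2)[of h] assms(2)[of "- h"] by (cases "0 \<le> h") auto
  then show ?thesis
    using Bochner_Integration.integrable_add[OF assms(1) integrable_reflect_lborel[OF assms(1)]] by simp
qed

lemma integral_split_reflect:
  fixes \<Psi> :: "real \<Rightarrow> real"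
  assumes "integrable lborel \<Psi>"
  shows "(\<integral>h. \<Psi> h \<partial>lborel) = (\<integral>h. indicator {0<..} h * (\<Psi> h + \<Psi> (- h)) \<partial>lborel)"
    and "integrable lborel (\<lambda>h. indicator {0<..} h * (\<Psi> h + \<Psi> (- h)))"
proof -
  have pos: "integrable lborel (\<lambda>h. indicator {0<..} h * \<Psi> h)"
    using integrable_mult_indicator[OF _ assms, of "{0<..}"] by simp
  have neg: "integrable lborel (\<lambda>h. indicator {..<0} h * \<Psi> h)"
    using integrable_mult_indicator[OF _ assms, of "{..<0}"] by simp
  have neg_reflected: "indicator {..<0} (- h) * \<Psi> (- h) = indicator {0<..} h * \<Psi> (- h)" for h
    by (auto simp: indicator_def)
  have split: "AE h in lborel. \<Psi> h = indicator {0<..} h * \<Psi> h + indicator {..<0} h * \<Psi> h"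
    using AE_lborel_singleton[of 0] by eventually_elim (auto simp: indicator_def)
  have "(\<integral>h. \<Psi> h \<partial>lborel) = (\<integral>h. indicator {0<..} h * \<Psi> h + indicator {..<0} h * \<Psi> h \<partial>lborel)"
    by (intro integral_cong_AE split borel_measurable_integrable Bochner_Integration.integrable_add pos neg assms)
  also have "\<dots> = (\<integral>h. indicator {0<..} h * \<Psi> h \<partial>lborel) + (\<integral>h. indicator {0<..} h * \<Psi> (- h) \<partial>lborel)"
    using integral_reflect_lborel[of "\<lambda>h. indicator {..<0} h * \<Psi> h"] pos neg
    by (simp add: neg_reflected)
  also have "\<dots> = (\<integral>h. indicator {0<..} h * (\<Psi> h + \<Psi> (- h)) \<partial>lborel)"
    using integrable_reflect_lborel[OF neg] pos by (simp add: neg_reflected distrib_left)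
  finally show "(\<integral>h. \<Psi> h \<partial>lborel) = (\<integral>h. indicator {0<..} h * (\<Psi> h + \<Psi> (- h)) \<partial>lborel)" .
  show "integrable lborel (\<lambda>h. indicator {0<..} h * (\<Psi> h + \<Psi> (- h)))"
    using Bochner_Integration.integrable_add[OF pos integrable_reflect_lborel[OF neg]] by (simp add: neg_reflected distrib_left)
qed

section \<open>Correlations of a bounded density\<close>

locale bounded_density =
  fixes \<rho> :: "real \<Rightarrow> real" and M :: real
  assumes nonneg: "\<And>x. 0 \<le> \<rho> x" and le_bound: "\<And>x. \<rho> x \<le> M"
    and density_measurable[measurable]: "\<rho> \<in> borel_measurable borel"
    and integrable_density: "integrable lborel \<rho>"
begin

lemma bound_nonneg: "0 \<le> M"
  using nonneg[of 0] le_bound[of 0] by linarith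

lemma integrable_indicator_mult_shift:
  assumes [measurable]: "S \<in> sets borel"
  shows "integrable lborel (\<lambda>x. indicator S x * (\<rho> x * \<rho> (x + h)))"
proof (rule Bochner_Integration.integrable_bound)
  show "integrable lborel (\<lambda>x. M * \<rho> x)"
    using integrable_density by simp
  show "AE x in lborel. norm (indicator S x * (\<rho> x * \<rho> (x + h))) \<le> norm (M * \<rho> x)"
  proof (rule AE_I2)
    fix x
    have "\<rho> x * \<rho> (x + h) \<le> \<rho> x * M"
      using nonneg le_bound by (intro mult_left_mono) auto
    then show "norm (indicator S x * (\<rho> x * \<rho> (x + h))) \<le> norm (M * \<rho> x)"
      using nonneg[of x] nonneg[of "x + h"] bound_nonneg
      by (auto simp: indicator_def abs_mult mult.commute)
  qed
qed measurable

definition Iic_correlation :: "real \<Rightarrow> real \<Rightarrow> real" where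
  "Iic_correlation p h = (\<integral>x. indicator {..p} x * (\<rho> x * (\<rho> (x + h) - \<rho> x)) \<partial>lborel)"

definition window_correlation :: "real \<Rightarrow> real \<Rightarrow> real" where
  "window_correlation p h = (\<integral>x. indicator {p - h<..p} x * (\<rho> x * \<rho> (x + h)) \<partial>lborel)"

definition segment_correlation :: "real \<Rightarrow> real \<Rightarrow> real" where
  "segment_correlation p q = (\<integral>s\<in>{0..1}. \<rho> (p - s * q) * \<rho> (p - s * q + q) \<partial>lborel)"

lemma Iic_correlation_eq_diff:
  "Iic_correlation p h =
    (\<integral>x. indicator {..p} x * (\<rho> x * \<rho> (x + h)) \<partial>lborel) - (\<integral>x. indicator {..p} x * (\<rho> x * \<rho> x) \<partial>lborel)"
proof -
  have "Iic_correlation p h =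
      (\<integral>x. indicator {..p} x * (\<rho> x * \<rho> (x + h)) - indicator {..p} x * (\<rho> x * \<rho> x) \<partial>lborel)"
    unfolding Iic_correlation_def by (rule Bochner_Integration.integral_cong) (simp_all add: algebra_simps)
  also have "\<dots> = (\<integral>x. indicator {..p} x * (\<rho> x * \<rho> (x + h)) \<partial>lborel) - (\<integral>x. indicator {..p} x * (\<rho> x * \<rho> x) \<partial>lborel)"
    using integrable_indicator_mult_shift[of "{..p}" h] integrable_indicator_mult_shift[of "{..p}" 0]
    by (simp add: Bochner_Integration.integral_diff)
  finally show ?thesis .
qed

text \<open>Shifting x by h turns the correlation at -h into one over {..p - h}, so only the
  window {p - h<..p} remains.\<close>
lemma Iic_correlation_diff_uminus:
  assumes "0 < h"
  shows "Iic_correlation p h - Iic_correlation p (- h) = window_correlation p h"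
proof -
  have "(\<integral>x. indicator {..p} x * (\<rho> x * \<rho> (x - h)) \<partial>lborel) =
      (\<integral>x. indicator {..p} (h + x) * (\<rho> (h + x) * \<rho> x) \<partial>lborel)"
    using lborel_integral_real_affine[of 1 "\<lambda>x. indicator {..p} x * (\<rho> x * \<rho> (x - h))" h] by simp
  also have "\<dots> = (\<integral>x. indicator {..p - h} x * (\<rho> x * \<rho> (x + h)) \<partial>lborel)"
    by (rule Bochner_Integration.integral_cong) (auto simp: indicator_def ac_simps)
  finally have shifted: "(\<integral>x. indicator {..p} x * (\<rho> x * \<rho> (x - h)) \<partial>lborel) =
      (\<integral>x. indicator {..p - h} x * (\<rho> x * \<rho> (x + h)) \<partial>lborel)" .
  have "Iic_correlation p h - Iic_correlation p (- h) =
      (\<integral>x. indicator {..p} x * (\<rho> x * \<rho> (x + h)) - indicator {..p - h} x * (\<rho> x * \<rho> (x + h)) \<partial>lborel)"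
    unfolding Iic_correlation_eq_diff[of p] using shifted
    by (simp add: Bochner_Integration.integral_diff integrable_indicator_mult_shift)
  also have "\<dots> = window_correlation p h"
    unfolding window_correlation_def
    by (rule Bochner_Integration.integral_cong) (use assms in \<open>auto simp: indicator_def\<close>)
  finally show ?thesis .
qed

lemma segment_correlation_uminus: "segment_correlation p (- q) = segment_correlation p q"
proof -
  have "segment_correlation p (- q) =
      (\<integral>s. indicator {0..1} (1 + - 1 * s) * (\<rho> (p - (1 + - 1 * s) * - q) * \<rho> (p - (1 + - 1 * s) * - q + - q)) \<partial>lborel)"
    unfolding segment_correlation_def set_lebesgue_integral_def
    using lborel_integral_real_affine[of "- 1" _ 1] by simp
  also have "\<dots> = segment_correlation p q"
    unfolding segment_correlation_def set_lebesgue_integral_def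
    by (rule Bochner_Integration.integral_cong) (auto simp: indicator_def algebra_simps)
  finally show ?thesis .
qed

lemma segment_correlation_eq_window:
  assumes "0 < q"
  shows "segment_correlation p q = window_correlation p q / q"
proof -
  have "segment_correlation p q =
      (\<integral>s. indicator {0..1} s * (\<rho> (p - s * q) * \<rho> (p - s * q + q)) \<partial>lborel)"
    by (simp add: segment_correlation_def set_lebesgue_integral_def)
  also have "\<dots> = \<bar>- 1 / q\<bar> *\<^sub>R (\<integral>x. indicator {0..1} (p / q + - 1 / q * x) *
        (\<rho> (p - (p / q + - 1 / q * x) * q) * \<rho> (p - (p / q + - 1 / q * x) * q + q)) \<partial>lborel)"
    by (rule lborel_integral_real_affine) (use assms in simp)
  also have "(\<integral>x. indicator {0..1} (p / q + - 1 / q * x) *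
        (\<rho> (p - (p / q + - 1 / q * x) * q) * \<rho> (p - (p / q + - 1 / q * x) * q + q)) \<partial>lborel) =
      (\<integral>x. indicator {p - q..p} x * (\<rho> x * \<rho> (x + q)) \<partial>lborel)"
  proof (rule Bochner_Integration.integral_cong[OF refl])
    fix x
    have "p / q + - 1 / q * x = (p - x) / q" and "p - (p - x) / q * q = x"
      using assms by (simp_all add: field_simps)
    moreover have "(p - x) / q \<in> {0..1} \<longleftrightarrow> x \<in> {p - q..p}"
      using assms by (auto simp: zero_le_divide_iff divide_le_eq_1)
    ultimately show "indicator {0..1} (p / q + - 1 / q * x) *
        (\<rho> (p - (p / q + - 1 / q * x) * q) * \<rho> (p - (p / q + - 1 / q * x) * q + q)) =
      indicator {p - q..p} x * (\<rho> x * \<rho> (x + q))"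
      by (simp add: indicator_def)
  qed
  also have "\<dots> = window_correlation p q"
    unfolding window_correlation_def
    by (rule integral_cong_AE) (use AE_lborel_singleton[of "p - q"] in \<open>auto simp: indicator_def elim!: eventually_mono\<close>)
  finally show ?thesis
    using assms by simp
qed

text \<open>By the symmetry of the segment correlation both half-lines contribute the same.\<close>
lemma integral_segment_correlation:
  assumes "integrable lborel (\<lambda>h. indicator {0<..} h * (h powr (k - 1) * window_correlation p h))"
  shows "(\<integral>q. \<bar>q\<bar> powr k * segment_correlation p q \<partial>lborel) =
    2 * (\<integral>h. indicator {0<..} h * (h powr (k - 1) * window_correlation p h) \<partial>lborel)"
proof -
  let ?\<Lambda> = "\<lambda>h. indicator {0<..} h * (h powr (k - 1) * window_correlation p h)"
  have "\<bar>q\<bar> powr k * segment_correlation p q = ?\<Lambda> q + ?\<Lambda> (- q)" for q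
  proof -
    have "\<bar>q\<bar> powr k * segment_correlation p q = \<bar>q\<bar> powr (k - 1) * window_correlation p \<bar>q\<bar>" if "q \<noteq> 0"
      using segment_correlation_eq_window[of "\<bar>q\<bar>" p] segment_correlation_uminus[of p q] that
      by (cases "0 < q") (auto simp: powr_diff)
    then show ?thesis
      by (cases "0 < q"; cases "q = 0") (auto simp: indicator_def)
  qed
  then have "(\<integral>q. \<bar>q\<bar> powr k * segment_correlation p q \<partial>lborel) = (\<integral>q. ?\<Lambda> q \<partial>lborel) + (\<integral>q. ?\<Lambda> (- q) \<partial>lborel)"
    using assms integrable_reflect_lborel[OF assms] by simp
  then show ?thesis
    using integral_reflect_lborel[of ?\<Lambda>] by simp
qed

end

section \<open>The aggregation flux of a Holder continuous density\<close>

lemma neg_mult_dS_eq: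
  "- \<rho> x * dS k \<rho> x = (\<integral>h. \<rho> x * (sgn h * \<bar>h\<bar> powr (k - 1) * (\<rho> (x + h) - \<rho> x)) \<partial>lborel)"
proof -
  have "dS k \<rho> x = \<bar>1\<bar> *\<^sub>R (\<integral>h. Wk_deriv k (x - (x + 1 * h)) * (\<rho> (x + 1 * h) - \<rho> x) \<partial>lborel)"
    unfolding dS_def by (rule lborel_integral_real_affine) simp
  then show ?thesis
    by (simp add: Wk_deriv_def sgn_minus)
qed

lemma holder_imp_isCont:
  fixes f :: "real \<Rightarrow> real"
  assumes "\<And>x y. \<bar>f x - f y\<bar> \<le> C * \<bar>x - y\<bar> powr \<alpha>" and "0 < \<alpha>"
  shows "isCont f x"
proof -
  have "((\<lambda>y. \<bar>y - x\<bar> powr \<alpha>) \<longlongrightarrow> 0) (at x)"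
    by (rule tendsto_zero_powrI) (use \<open>0 < \<alpha>\<close> in \<open>auto intro!: tendsto_eq_intros\<close>)
  then have "((\<lambda>y. C * \<bar>y - x\<bar> powr \<alpha>) \<longlongrightarrow> 0) (at x)"
    using tendsto_mult_right_zero by blast
  then have "((\<lambda>y. f y - f x) \<longlongrightarrow> 0) (at x)"
    by (rule Lim_null_comparison[rotated]) (use assms(1) in \<open>auto intro: always_eventually\<close>)
  then show ?thesis
    unfolding isCont_def by (rule LIM_zero_cancel)
qed

locale holder_density = bounded_density +
  fixes C \<alpha> k :: real
  assumes holder: "\<And>x y. \<bar>\<rho> x - \<rho> y\<bar> \<le> C * \<bar>x - y\<bar> powr \<alpha>"
    and k_neg: "k < 0" and holder_exponent: "- k < \<alpha>"
begin

definition kernel :: "real \<Rightarrow> real \<Rightarrow> real" where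
  "kernel x h = \<rho> x * (sgn h * \<bar>h\<bar> powr (k - 1) * (\<rho> (x + h) - \<rho> x))"

definition flux :: "real \<Rightarrow> real" where
  "flux x = (\<integral>h. kernel x h \<partial>lborel)"

definition majorant :: "real \<Rightarrow> real" where
  "majorant h = C * (indicator {0<..1} \<bar>h\<bar> * \<bar>h\<bar> powr (k - 1 + \<alpha>))
    + 2 * M * (indicator {1..} \<bar>h\<bar> * \<bar>h\<bar> powr (k - 1))"

lemma holder_const_nonneg: "0 \<le> C"
proof -
  have "\<bar>\<rho> 1 - \<rho> 0\<bar> \<le> C"
    using holder[of 1 0] by simp
  then show ?thesis
    by (meson abs_ge_zero order_trans)
qed

lemma majorant_nonneg: "0 \<le> majorant h"
  using holder_const_nonneg bound_nonneg by (simp add: majorant_def)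

lemma integrable_majorant: "integrable lborel majorant"
proof -
  have "integrable lborel (\<lambda>h. indicator {0<..1} \<bar>h\<bar> * \<bar>h\<bar> powr (k - 1 + \<alpha>))"
    by (rule integrable_comp_abs[OF integrable_indicator_Ioc_powr])
       (use holder_exponent in \<open>auto simp: indicator_def\<close>)
  moreover have "integrable lborel (\<lambda>h. indicator {1..} \<bar>h\<bar> * \<bar>h\<bar> powr (k - 1))"
    by (rule integrable_comp_abs[OF integrable_indicator_Ici_powr]) (use k_neg in auto)
  ultimately show ?thesis
    unfolding majorant_def[abs_def] by simp
qed

lemma majorant_measurable[measurable]: "majorant \<in> borel_measurable borel"
  unfolding majorant_def[abs_def] by measurable

text \<open>Near the diagonal the Holder bound compensates the singularity of the kernel,
  far from it boundedness and the decay of the kernel suffice.\<close>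
lemma abs_kernel_le: "\<bar>kernel x h\<bar> \<le> \<rho> x * majorant h"
proof -
  let ?D = "\<bar>\<rho> (x + h) - \<rho> x\<bar>"
  have "\<bar>h\<bar> powr (k - 1) * ?D \<le> majorant h"
  proof -
    consider "h = 0" | "0 < \<bar>h\<bar>" "\<bar>h\<bar> \<le> 1" | "1 < \<bar>h\<bar>" by linarith
    then show ?thesis
    proof cases
      case 1
      then show ?thesis using majorant_nonneg by simp
    next
      case 2
      have "\<bar>h\<bar> powr (k - 1) * ?D \<le> \<bar>h\<bar> powr (k - 1) * (C * \<bar>h\<bar> powr \<alpha>)"
        using holder[of "x + h" x] by (intro mult_left_mono) auto
      also have "\<dots> = C * (indicator {0<..1} \<bar>h\<bar> * \<bar>h\<bar> powr (k - 1 + \<alpha>))"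
        using 2 by (simp add: powr_add)
      also have "\<dots> \<le> majorant h"
        using bound_nonneg by (simp add: majorant_def)
      finally show ?thesis .
    next
      case 3
      have "?D \<le> 2 * M"
        using nonneg[of x] le_bound[of x] nonneg[of "x + h"] le_bound[of "x + h"] by linarith
      then have "\<bar>h\<bar> powr (k - 1) * ?D \<le> \<bar>h\<bar> powr (k - 1) * (2 * M)"
        by (intro mult_left_mono) auto
      also have "\<dots> = 2 * M * (indicator {1..} \<bar>h\<bar> * \<bar>h\<bar> powr (k - 1))"
        using 3 by simp
      also have "\<dots> \<le> majorant h"
        using holder_const_nonneg by (simp add: majorant_def)
      finally show ?thesis .
    qed
  qed
  then have "\<bar>sgn h\<bar> * (\<bar>h\<bar> powr (k - 1) * ?D) \<le> 1 * majorant h"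
    by (intro mult_mono) (auto simp: abs_sgn_eq majorant_nonneg)
  then show ?thesis
    using nonneg[of x] by (simp add: kernel_def abs_mult mult_left_mono)
qed

lemma kernel_measurable[measurable]: "(\<lambda>(x, h). kernel x h) \<in> borel_measurable (lborel \<Otimes>\<^sub>M lborel)"
  unfolding kernel_def by measurable

lemma integrable_kernel: "integrable lborel (kernel x)"
proof (rule Bochner_Integration.integrable_bound)
  show "integrable lborel (\<lambda>h. \<rho> x * majorant h)"
    using integrable_majorant by simp
  show "AE h in lborel. norm (kernel x h) \<le> norm (\<rho> x * majorant h)"
    using abs_kernel_le[of x] by (intro AE_I2) (metis abs_ge_self order_trans real_norm_def)
qed (unfold kernel_def, measurable)

lemma abs_flux_le: "\<bar>flux x\<bar> \<le> \<rho> x * (\<integral>h. majorant h \<partial>lborel)"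
proof -
  have "\<bar>flux x\<bar> \<le> (\<integral>h. \<rho> x * majorant h \<partial>lborel)"
    unfolding flux_def
    by (rule integral_abs_bound_integral[OF integrable_kernel]) (use integrable_majorant abs_kernel_le in auto)
  then show ?thesis by simp
qed

lemma flux_measurable[measurable]: "flux \<in> borel_measurable borel"
proof -
  have "(\<lambda>x. \<integral>h. kernel x h \<partial>lborel) \<in> borel_measurable lborel"
    by measurable
  then show ?thesis
    by (simp add: flux_def[abs_def])
qed

lemma integrable_flux: "integrable lborel flux"
proof (rule Bochner_Integration.integrable_bound)
  show "integrable lborel (\<lambda>x. \<rho> x * (\<integral>h. majorant h \<partial>lborel))"
    using integrable_density by simp
  show "AE x in lborel. norm (flux x) \<le> norm (\<rho> x * (\<integral>h. majorant h \<partial>lborel))"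
    using abs_flux_le by (intro AE_I2) (metis abs_ge_self order_trans real_norm_def)
qed simp

lemma integrable_indicator_kernel:
  "integrable (lborel \<Otimes>\<^sub>M lborel) (\<lambda>(x, h). indicator {..p} x * kernel x h)"
proof (rule lborel_pair.Fubini_integrable)
  show "integrable lborel (\<lambda>x. \<integral>h. norm (case (x, h) of (x, h) \<Rightarrow> indicator {..p} x * kernel x h) \<partial>lborel)"
  proof (rule Bochner_Integration.integrable_bound)
    show "integrable lborel (\<lambda>x. \<rho> x * (\<integral>h. majorant h \<partial>lborel))"
      using integrable_density by simp
    have "(\<integral>h. norm (indicator {..p} x * kernel x h) \<partial>lborel) \<le> (\<integral>h. \<rho> x * majorant h \<partial>lborel)" for x
      using abs_kernel_le[of x] integrable_kernel[of x] integrable_majorant nonneg[of x] majorant_nonneg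
      by (intro integral_mono) (auto simp: indicator_def abs_mult intro: order_trans)
    moreover have "0 \<le> (\<integral>h. majorant h \<partial>lborel)"
      using majorant_nonneg by (simp add: integral_nonneg_AE)
    ultimately show "AE x in lborel. norm (\<integral>h. norm (case (x, h) of (x, h) \<Rightarrow> indicator {..p} x * kernel x h) \<partial>lborel)
        \<le> norm (\<rho> x * (\<integral>h. majorant h \<partial>lborel))"
      using nonneg by (intro AE_I2) (simp add: integral_nonneg_AE)
  qed measurable
qed (use integrable_kernel in \<open>auto intro!: AE_I2\<close>)

lemma indicator_kernel_integral:
  "(\<integral>x. indicator {..p} x * kernel x h \<partial>lborel) = sgn h * \<bar>h\<bar> powr (k - 1) * Iic_correlation p h"
proof -
  have "(\<integral>x. indicator {..p} x * kernel x h \<partial>lborel) =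
      (\<integral>x. (sgn h * \<bar>h\<bar> powr (k - 1)) * (indicator {..p} x * (\<rho> x * (\<rho> (x + h) - \<rho> x))) \<partial>lborel)"
    unfolding kernel_def by (rule Bochner_Integration.integral_cong) (simp_all add: ac_simps)
  then show ?thesis
    by (simp add: Iic_correlation_def)
qed

lemma integral_flux_Iic_Fubini:
  shows "(LINT x:{..p}|lborel. flux x) = (\<integral>h. sgn h * \<bar>h\<bar> powr (k - 1) * Iic_correlation p h \<partial>lborel)"
    and "integrable lborel (\<lambda>h. sgn h * \<bar>h\<bar> powr (k - 1) * Iic_correlation p h)"
proof -
  have "(LINT x:{..p}|lborel. flux x) = (\<integral>x. (\<integral>h. indicator {..p} x * kernel x h \<partial>lborel) \<partial>lborel)"
    unfolding set_lebesgue_integral_def flux_def by simp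
  also have "\<dots> = (\<integral>h. (\<integral>x. indicator {..p} x * kernel x h \<partial>lborel) \<partial>lborel)"
    using lborel_pair.Fubini_integral[OF integrable_indicator_kernel[of p]] by simp
  finally show "(LINT x:{..p}|lborel. flux x) = (\<integral>h. sgn h * \<bar>h\<bar> powr (k - 1) * Iic_correlation p h \<partial>lborel)"
    by (simp only: indicator_kernel_integral)
  show "integrable lborel (\<lambda>h. sgn h * \<bar>h\<bar> powr (k - 1) * Iic_correlation p h)"
    using lborel_pair.integrable_snd[OF integrable_indicator_kernel[of p]]
    by (simp only: case_prod_conv indicator_kernel_integral)
qed

lemma integral_flux_Iic:
  shows "(LINT x:{..p}|lborel. flux x) =
      (\<integral>h. indicator {0<..} h * (h powr (k - 1) * window_correlation p h) \<partial>lborel)"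
    and "integrable lborel (\<lambda>h. indicator {0<..} h * (h powr (k - 1) * window_correlation p h))"
proof -
  let ?\<Psi> = "\<lambda>h. sgn h * \<bar>h\<bar> powr (k - 1) * Iic_correlation p h"
  have pointwise: "indicator {0<..} h * (?\<Psi> h + ?\<Psi> (- h)) =
      indicator {0<..} h * (h powr (k - 1) * window_correlation p h)" for h
  proof (cases "0 < h")
    case True
    then have "?\<Psi> h + ?\<Psi> (- h) = h powr (k - 1) * (Iic_correlation p h - Iic_correlation p (- h))"
      by (simp add: algebra_simps)
    with True show ?thesis
      by (simp add: Iic_correlation_diff_uminus)
  qed simp
  note split = integral_split_reflect[OF integral_flux_Iic_Fubini(2)[of p]]
  show "(LINT x:{..p}|lborel. flux x) =
      (\<integral>h. indicator {0<..} h * (h powr (k - 1) * window_correlation p h) \<partial>lborel)"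
    using integral_flux_Iic_Fubini(1)[of p] split(1) by (simp only: pointwise)
  show "integrable lborel (\<lambda>h. indicator {0<..} h * (h powr (k - 1) * window_correlation p h))"
    using split(2) by (simp only: pointwise)
qed

lemma powr_eq_integral_flux:
  assumes "0 < m" and "integrable lborel (\<lambda>x. \<rho> x powr m)"
    and "weak_deriv (\<lambda>x. \<rho> x powr m) (\<lambda>x. chi * flux x)"
  shows "\<rho> p powr m = chi * (LINT x:{..p}|lborel. flux x)"
proof -
  have cont: "isCont (\<lambda>x. \<rho> x powr m) x" for x
    using holder_imp_isCont[OF holder] holder_exponent k_neg assms(1) nonneg
    by (auto intro!: continuous_intros)
  have bound: "\<bar>\<rho> x powr m\<bar> \<le> M powr m" for x
    using nonneg[of x] le_bound[of x] assms(1) by (simp add: powr_mono2)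
  have "\<rho> p powr m = (LINT x:{..p}|lborel. chi * flux x)"
    by (rule weak_deriv_imp_integral_Iic[OF assms(3) cont _ bound]) (use assms(2) integrable_flux in auto)
  then show ?thesis
    by (simp add: set_integral_mult_right)
qed

end

lemma stationary_state_imp_holder_density:
  assumes "stationary_state chi k m \<rho>" and "k < 0"
  obtains M C \<alpha> where "holder_density \<rho> M C \<alpha> k"
proof -
  obtain M where "\<And>x. norm (\<rho> x) \<le> M"
    using assms(1) unfolding stationary_state_def bounded_iff by blast
  moreover obtain \<alpha> C where "- k < \<alpha>" "\<And>x y. \<bar>\<rho> x - \<rho> y\<bar> \<le> C * \<bar>x - y\<bar> powr \<alpha>"
    using assms(1) unfolding stationary_state_def holder_def by blast
  ultimately show ?thesis
    using assms that[of M C \<alpha>]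
    unfolding holder_density_def holder_density_axioms_def bounded_density_def stationary_state_def
    by (auto simp: abs_le_iff)
qed

theorem lemma4p2:
  fixes chi k m :: real and \<rho> :: "real \<Rightarrow> real"
  assumes "chi > 0" and "-1 < k" and "k < 0" and "m > 1 - k"
    and "stationary_state chi k m \<rho>" and "in_Y m \<rho>"
  shows "\<forall>p. \<rho> p powr m =
    chi / 2 * (\<integral>q. \<bar>q\<bar> powr k *
       (\<integral>s\<in>{0..1}. \<rho> (p - s * q) * \<rho> (p - s * q + q) \<partial>lborel) \<partial>lborel)"
proof
  fix p
  obtain M C \<alpha> where "holder_density \<rho> M C \<alpha> k"
    using stationary_state_imp_holder_density[OF assms(5,3)] .
  then interpret holder_density \<rho> M C \<alpha> k .
  have "- chi * \<rho> x * dS k \<rho> x = chi * (- \<rho> x * dS k \<rho> x)" for x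
    by simp
  also have "chi * (- \<rho> x * dS k \<rho> x) = chi * flux x" for x
    by (simp only: neg_mult_dS_eq flux_def kernel_def)
  finally have "(\<lambda>x. - chi * \<rho> x * dS k \<rho> x) = (\<lambda>x. chi * flux x)"
    by (rule ext)
  then have "weak_deriv (\<lambda>x. \<rho> x powr m) (\<lambda>x. chi * flux x)"
    using assms(5) unfolding stationary_state_def by simp
  moreover have "integrable lborel (\<lambda>x. \<rho> x powr m)"
    using assms(6) nonneg unfolding in_Y_def by simp
  ultimately have "\<rho> p powr m = chi * (LINT x:{..p}|lborel. flux x)"
    by (intro powr_eq_integral_flux) (use assms(3,4) in auto)
  also have "\<dots> = chi / 2 * (\<integral>q. \<bar>q\<bar> powr k * segment_correlation p q \<partial>lborel)"
    by (simp add: integral_flux_Iic integral_segment_correlation)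
  finally show "\<rho> p powr m = chi / 2 * (\<integral>q. \<bar>q\<bar> powr k *
       (\<integral>s\<in>{0..1}. \<rho> (p - s * q) * \<rho> (p - s * q + q) \<partial>lborel) \<partial>lborel)"
    by (simp add: segment_correlation_def)
qed

end
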